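(* Let $\mathcal{K}=(\mathcal{R},\mathcal{T})$ be an ME-consistent $\mathcal{ALCP}$ knowledge base, $C,D$ concepts, $\kappa\in\mathcal{L}$, and $p_1<p_2$. Suppose $\mathcal{P}_1,\mathcal{P}_2$ are ME-$\mathcal{ALCP}$-models of $\mathcal{K}$ with $\Pr_{\mathcal{P}_1}(C\sqsubseteq D\mid\kappa)=p_1$ and $\Pr_{\mathcal{P}_2}(C\sqsubseteq D\mid\kappa)=p_2$. Then for every $p$ between $p_1$ and $p_2$ there exists an ME-$\mathcal{ALCP}$-model $\mathcal{P}$ of $\mathcal{K}$ with $\Pr_{\mathcal{P}}(C\sqsubseteq D\mid\kappa)=p$.
   Context: $\mathcal{L}$ is a propositional language over a finite set of variables; $\mathrm{Int}(\mathcal{L})$ is the set of truth assignments. A probability distribution over $\mathcal{L}$ is $P:\mathrm{Int}(\mathcal{L})\to[0,1]$ summing to $1$, with $P(\phi)=\sum_{v\models\phi}P(v)$. A probabilistic constraint is $c_0+\sum_{i=1}^k c_i\,\mathsf{p}(\phi_i)\ge 0$ ($c_i\in\mathbb{R}$, $\phi_i\in\mathcal{L}$), satisfied by $P$ iff $c_0+\sum_ic_iP(\phi_i)\ge0$; $\mathrm{Mod}(\mathcal{R})$ is the set of distributions satisfying all constraints in $\mathcal{R}$; for consistent $\mathcal{R}$ (i.e. $\mathrm{Mod}(\mathcal{R})\ne\emptyset$), $P^{ME}_{\mathcal{R}}$ is the unique maximizer in $\mathrm{Mod}(\mathcal{R})$ of $H(P)=-\sum_vP(v)\log P(v)$. Concepts: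 $C::=A\mid\neg C\mid C\sqcap C\mid\exists r.C$ with concept names $A$ and role names $r$. An $\mathcal{L}$-GCI is $\langle C\sqsubseteq D:\kappa\rangle$, $\kappa\in\mathcal{L}$; an $\mathcal{L}$-TBox is a finite set of them; a KB is $\mathcal{K}=(\mathcal{R},\mathcal{T})$ with $\mathcal{R}$ a set of probabilistic constraints and $\mathcal{T}$ an $\mathcal{L}$-TBox. A possible world $\mathcal{I}=(\Delta^{\mathcal{I}},\cdot^{\mathcal{I}},v^{\mathcal{I}})$ consists of a classical $\mathcal{ALC}$ interpretation (nonempty domain, concept names to subsets, role names to binary relations, extended as usual to complex concepts) and $v^{\mathcal{I}}\in\mathrm{Int}(\mathcal{L})$; it models $\langle C\sqsubseteq D:\kappa\rangle$ iff $v^{\mathcal{I}}\not\models\kappa$ or $C^{\mathcal{I}}\subseteq D^{\mathcal{I}}$. We write $\mathcal{I}\models\kappa$ for $v^{\mathcal{I}}\models\kappa$ and $\mathcal{I}\models C\sqsubseteq D$ for $C^{\mathcal{I}}\subseteq D^{\mathcal{I}}$. An $\mathcal{ALCP}$-interpretation $\mathcal{P}=(\mathfrak{I},P_{\mathfrak{I}})$ is a nonempty finite set of possible worlds with a probability distribution on it; $P^{\mathcal{P}}(v)=\sum_{\mathcal{I}\in\mathfrak{I},v^{\mathcal{I}}=v}P_{\mathfrak{I}}(\mathcal{I})$. $\mathcal{P}$ is an ME-$\mathcal{ALCP}$-model of $\mathcal{K}$ iff all worlds in $\mathfrak{I}$ model every GCI of $\mathcal{T}$ and $P^{\mathcal{P}}=P^{ME}_{\mathcal{R}}$;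 $\mathcal{K}$ is ME-consistent iff such a model exists. $\Pr_{\mathcal{P}}(C\sqsubseteq D\mid\kappa)=\big(\sum_{\mathcal{I}\in\mathfrak{I},\mathcal{I}\models\kappa,\mathcal{I}\models C\sqsubseteq D}P_{\mathfrak{I}}(\mathcal{I})\big)/\big(\sum_{\mathcal{I}\in\mathfrak{I},\mathcal{I}\models\kappa}P_{\mathfrak{I}}(\mathcal{I})\big)$, defined when the denominator (which equals $P^{\mathcal{P}}(\kappa)$) is positive. *)

theory Defs
  imports Complex_Main
begin

datatype 'v pform =
    PTrue
  | PVar 'v
  | PNot "'v pform"
  | PAnd "'v pform" "'v pform"
  | POr "'v pform" "'v pform"

type_synonym 'v assignment = "'v \<Rightarrow> bool"

fun psat :: "'v assignment \<Rightarrow> 'v pform \<Rightarrow> bool" where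
  "psat v PTrue = True"
| "psat v (PVar x) = v x"
| "psat v (PNot f) = (\<not> psat v f)"
| "psat v (PAnd f g) = (psat v f \<and> psat v g)"
| "psat v (POr f g) = (psat v f \<or> psat v g)"

definition is_dist :: "('v::finite assignment \<Rightarrow> real) \<Rightarrow> bool" where
  "is_dist P \<longleftrightarrow> (\<forall>v. 0 \<le> P v) \<and> (\<Sum>v\<in>UNIV. P v) = 1"

definition prob_form :: "('v::finite assignment \<Rightarrow> real) \<Rightarrow> 'v pform \<Rightarrow> real" where
  "prob_form P \<phi> = (\<Sum>v\<in>{v. psat v \<phi>}. P v)"

text \<open>A probabilistic constraint c0 + sum_i c_i p(phi_i) >= 0 is (c0, [(c1,phi1),...,(ck,phik)]).\<close>

type_synonym 'v pconstr = "real \<times> (real \<times> 'v pform) list"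

definition sat_constr :: "('v::finite assignment \<Rightarrow> real) \<Rightarrow> 'v pconstr \<Rightarrow> bool" where
  "sat_constr P c \<longleftrightarrow> fst c + (\<Sum>(ci, \<phi>i)\<leftarrow>snd c. ci * prob_form P \<phi>i) \<ge> 0"

definition Mod :: "'v::finite pconstr set \<Rightarrow> ('v assignment \<Rightarrow> real) set" where
  "Mod R = {P. is_dist P \<and> (\<forall>c\<in>R. sat_constr P c)}"

definition consistent :: "'v::finite pconstr set \<Rightarrow> bool" where
  "consistent R \<longleftrightarrow> Mod R \<noteq> {}"

text \<open>Entropy; note ln 0 = 0 in Isabelle, giving the convention 0 log 0 = 0.\<close>

definition entropy :: "('v::finite assignment \<Rightarrow> real) \<Rightarrow> real" where
  "entropy P = - (\<Sum>v\<in>UNIV. P v * ln (P v))"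

text \<open>The ME distribution: the unique entropy maximiser in Mod R (meaningful for consistent R).\<close>

definition me_dist :: "'v::finite pconstr set \<Rightarrow> ('v assignment \<Rightarrow> real)" where
  "me_dist R = (THE P. P \<in> Mod R \<and> (\<forall>Q\<in>Mod R. entropy Q \<le> entropy P))"

datatype ('c, 'r) concept =
    CName 'c
  | CNeg "('c, 'r) concept"
  | CAnd "('c, 'r) concept" "('c, 'r) concept"
  | CEx 'r "('c, 'r) concept"

record ('d, 'c, 'r, 'v) pworld =
  wdom :: "'d set"
  cint :: "'c \<Rightarrow> 'd set"
  rint :: "'r \<Rightarrow> ('d \<times> 'd) set"
  wval :: "'v assignment"

definition wf_world :: "('d, 'c, 'r, 'v) pworld \<Rightarrow> bool" where
  "wf_world I \<longleftrightarrow> wdom I \<noteq> {} \<and> (\<forall>A. cint I A \<subseteq> wdom I)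
                  \<and> (\<forall>r. rint I r \<subseteq> wdom I \<times> wdom I)"

fun cext :: "('d, 'c, 'r, 'v) pworld \<Rightarrow> ('c, 'r) concept \<Rightarrow> 'd set" where
  "cext I (CName A) = cint I A"
| "cext I (CNeg C) = wdom I - cext I C"
| "cext I (CAnd C D) = cext I C \<inter> cext I D"
| "cext I (CEx r C) = {x \<in> wdom I. \<exists>y. (x, y) \<in> rint I r \<and> y \<in> cext I C}"

text \<open>L-GCI <C \<sqsubseteq> D : kappa> represented as (C, D, kappa).\<close>

type_synonym ('c, 'r, 'v) gci = "('c, 'r) concept \<times> ('c, 'r) concept \<times> 'v pform"

definition world_sat_incl :: "('d, 'c, 'r, 'v) pworld \<Rightarrow> ('c, 'r) concept \<Rightarrow> ('c, 'r) concept \<Rightarrow> bool" where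
  "world_sat_incl I C D \<longleftrightarrow> cext I C \<subseteq> cext I D"

definition world_models_gci :: "('d, 'c, 'r, 'v) pworld \<Rightarrow> ('c, 'r, 'v) gci \<Rightarrow> bool" where
  "world_models_gci I g = (case g of (C, D, \<kappa>) \<Rightarrow> \<not> psat (wval I) \<kappa> \<or> world_sat_incl I C D)"

type_synonym ('c, 'r, 'v) kb = "'v pconstr set \<times> ('c, 'r, 'v) gci set"

type_synonym ('d, 'c, 'r, 'v) alcp_interp =
  "('d, 'c, 'r, 'v) pworld set \<times> (('d, 'c, 'r, 'v) pworld \<Rightarrow> real)"

definition alcp_interp :: "('d, 'c, 'r, 'v) alcp_interp \<Rightarrow> bool" where
  "alcp_interp \<P> \<longleftrightarrow> (case \<P> of (W, Pw) \<Rightarrow>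
      finite W \<and> W \<noteq> {} \<and> (\<forall>I\<in>W. wf_world I) \<and> (\<forall>I\<in>W. 0 \<le> Pw I) \<and> (\<Sum>I\<in>W. Pw I) = 1)"

definition induced_dist :: "('d, 'c, 'r, 'v::finite) alcp_interp \<Rightarrow> ('v assignment \<Rightarrow> real)" where
  "induced_dist \<P> = (\<lambda>v. case \<P> of (W, Pw) \<Rightarrow> \<Sum>I\<in>{I\<in>W. wval I = v}. Pw I)"

definition me_model :: "('d, 'c, 'r, 'v::finite) alcp_interp \<Rightarrow> ('c, 'r, 'v) kb \<Rightarrow> bool" where
  "me_model \<P> K \<longleftrightarrow> (case K of (R, T) \<Rightarrow>
      finite T \<and> consistent R \<and> alcp_interp \<P>
      \<and> (\<forall>I\<in>fst \<P>. \<forall>g\<in>T. world_models_gci I g)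
      \<and> induced_dist \<P> = me_dist R)"

definition me_consistent :: "('c, 'r, 'v::finite) kb \<Rightarrow> 'd itself \<Rightarrow> bool" where
  "me_consistent K _ \<longleftrightarrow> (\<exists>\<P> :: ('d, 'c, 'r, 'v) alcp_interp. me_model \<P> K)"

definition cond_pr :: "('d, 'c, 'r, 'v) alcp_interp \<Rightarrow> ('c, 'r) concept \<Rightarrow> ('c, 'r) concept
                        \<Rightarrow> 'v pform \<Rightarrow> real option" where
  "cond_pr \<P> C D \<kappa> = (case \<P> of (W, Pw) \<Rightarrow>
     (let den = (\<Sum>I\<in>{I\<in>W. psat (wval I) \<kappa>}. Pw I);
          num = (\<Sum>I\<in>{I\<in>W. psat (wval I) \<kappa> \<and> world_sat_incl I C D}. Pw I)
      in if den > 0 then Some (num / den) else None))"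

end

theory Submission
  imports Defs
begin

text \<open>ME-models of a knowledge base are closed under convex mixtures: all of them induce the
  same distribution on assignments, so a mixture still induces the ME distribution and still
  consists of worlds satisfying the TBox. In particular all ME-models give the context \<open>\<kappa>\<close>
  the same mass, so the conditional probability of the mixture is the corresponding convex
  combination of the two conditional probabilities, which sweeps out the whole interval.\<close>

definition event_mass ::
    "('d, 'c, 'r, 'v) alcp_interp \<Rightarrow> (('d, 'c, 'r, 'v) pworld \<Rightarrow> bool) \<Rightarrow> real" where
  "event_mass \<P> Q = (case \<P> of (W, Pw) \<Rightarrow> \<Sum>I\<in>{I\<in>W. Q I}. Pw I)"

definition mix_interp :: "real \<Rightarrow> ('d, 'c, 'r, 'v) alcp_interp \<Rightarrow> ('d, 'c, 'r, 'v) alcp_interp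
    \<Rightarrow> ('d, 'c, 'r, 'v) alcp_interp" where
  "mix_interp t \<P>\<^sub>1 \<P>\<^sub>2 = (case \<P>\<^sub>1 of (W\<^sub>1, Pw\<^sub>1) \<Rightarrow> case \<P>\<^sub>2 of (W\<^sub>2, Pw\<^sub>2) \<Rightarrow>
     (W\<^sub>1 \<union> W\<^sub>2, \<lambda>I. t * (if I \<in> W\<^sub>1 then Pw\<^sub>1 I else 0) + (1 - t) * (if I \<in> W\<^sub>2 then Pw\<^sub>2 I else 0)))"

lemma induced_dist_eq_event_mass: "induced_dist \<P> v = event_mass \<P> (\<lambda>I. wval I = v)"
  by (simp add: induced_dist_def event_mass_def)

lemma cond_pr_eq_event_mass:
  "cond_pr \<P> C D \<kappa> =
    (if 0 < event_mass \<P> (\<lambda>I. psat (wval I) \<kappa>)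
     then Some (event_mass \<P> (\<lambda>I. psat (wval I) \<kappa> \<and> world_sat_incl I C D)
                / event_mass \<P> (\<lambda>I. psat (wval I) \<kappa>))
     else None)"
  by (cases \<P>) (simp add: cond_pr_def event_mass_def Let_def)

lemma sum_restrict_to_subset:
  assumes "finite U" "W \<subseteq> U"
  shows "(\<Sum>I\<in>{I\<in>U. Q I}. if I \<in> W then f I else 0) = (\<Sum>I\<in>{I\<in>W. Q I}. f I :: real)"
proof -
  have "(\<Sum>I\<in>{I\<in>U. Q I}. if I \<in> W then f I else 0) = (\<Sum>I\<in>{I\<in>U. Q I} \<inter> W. f I)"
    using assms(1) by (simp add: sum.inter_restrict)
  also have "{I\<in>U. Q I} \<inter> W = {I\<in>W. Q I}" using assms(2) by auto
  finally show ?thesis .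
qed

lemma event_mass_mix_interp:
  assumes "finite (fst \<P>\<^sub>1)" "finite (fst \<P>\<^sub>2)"
  shows "event_mass (mix_interp t \<P>\<^sub>1 \<P>\<^sub>2) Q = t * event_mass \<P>\<^sub>1 Q + (1 - t) * event_mass \<P>\<^sub>2 Q"
proof -
  obtain W\<^sub>1 Pw\<^sub>1 W\<^sub>2 Pw\<^sub>2 where P: "\<P>\<^sub>1 = (W\<^sub>1, Pw\<^sub>1)" "\<P>\<^sub>2 = (W\<^sub>2, Pw\<^sub>2)" by fastforce
  define U where "U = W\<^sub>1 \<union> W\<^sub>2"
  have U: "finite U" "W\<^sub>1 \<subseteq> U" "W\<^sub>2 \<subseteq> U"
    using assms P by (auto simp: U_def)
  have "event_mass (mix_interp t \<P>\<^sub>1 \<P>\<^sub>2) Q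
      = (\<Sum>I\<in>{I\<in>U. Q I}. t * (if I \<in> W\<^sub>1 then Pw\<^sub>1 I else 0) + (1 - t) * (if I \<in> W\<^sub>2 then Pw\<^sub>2 I else 0))"
    by (simp add: P event_mass_def mix_interp_def U_def)
  also have "\<dots> = t * (\<Sum>I\<in>{I\<in>U. Q I}. if I \<in> W\<^sub>1 then Pw\<^sub>1 I else 0)
      + (1 - t) * (\<Sum>I\<in>{I\<in>U. Q I}. if I \<in> W\<^sub>2 then Pw\<^sub>2 I else 0)"
    by (simp add: sum.distrib sum_distrib_left)
  also have "\<dots> = t * event_mass \<P>\<^sub>1 Q + (1 - t) * event_mass \<P>\<^sub>2 Q"
    by (simp add: P event_mass_def sum_restrict_to_subset[OF U(1,2)] sum_restrict_to_subset[OF U(1,3)])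
  finally show ?thesis .
qed

lemma alcp_interp_mix_interp:
  assumes "alcp_interp \<P>\<^sub>1" "alcp_interp \<P>\<^sub>2" "0 \<le> t" "t \<le> 1"
  shows "alcp_interp (mix_interp t \<P>\<^sub>1 \<P>\<^sub>2)"
proof -
  obtain W\<^sub>1 Pw\<^sub>1 W\<^sub>2 Pw\<^sub>2 where P: "\<P>\<^sub>1 = (W\<^sub>1, Pw\<^sub>1)" "\<P>\<^sub>2 = (W\<^sub>2, Pw\<^sub>2)" by fastforce
  have "finite (fst \<P>\<^sub>1)" "finite (fst \<P>\<^sub>2)" "event_mass \<P>\<^sub>1 (\<lambda>_. True) = 1" "event_mass \<P>\<^sub>2 (\<lambda>_. True) = 1"
    using assms(1,2) by (simp_all add: alcp_interp_def event_mass_def P)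
  then have "event_mass (mix_interp t \<P>\<^sub>1 \<P>\<^sub>2) (\<lambda>_. True) = 1"
    by (simp add: event_mass_mix_interp)
  then have "sum (snd (mix_interp t \<P>\<^sub>1 \<P>\<^sub>2)) (fst (mix_interp t \<P>\<^sub>1 \<P>\<^sub>2)) = 1"
    by (simp add: event_mass_def mix_interp_def P)
  with assms show ?thesis
    by (auto simp: alcp_interp_def mix_interp_def P)
qed

lemma event_mass_context_eq_prob_form:
  fixes \<P> :: "('d, 'c, 'r, 'v::finite) alcp_interp"
  assumes "finite (fst \<P>)"
  shows "event_mass \<P> (\<lambda>I. psat (wval I) \<kappa>) = prob_form (induced_dist \<P>) \<kappa>"
proof -
  obtain W Pw where P: "\<P> = (W, Pw)" by fastforce
  have "prob_form (induced_dist \<P>) \<kappa>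
      = (\<Sum>v\<in>{v. psat v \<kappa>}. sum Pw {I\<in>{I\<in>W. psat (wval I) \<kappa>}. wval I = v})"
    unfolding prob_form_def induced_dist_def P
    by (intro sum.cong) (auto intro!: arg_cong[where f = "sum Pw"])
  also have "\<dots> = (\<Sum>I\<in>{I\<in>W. psat (wval I) \<kappa>}. Pw I)"
    using assms P by (intro sum.group) auto
  finally show ?thesis by (simp add: event_mass_def P)
qed

lemma me_model_mix_interp:
  assumes "me_model \<P>\<^sub>1 K" "me_model \<P>\<^sub>2 K" "0 \<le> t" "t \<le> 1"
  shows "me_model (mix_interp t \<P>\<^sub>1 \<P>\<^sub>2) K"
proof -
  obtain R T where K: "K = (R, T)" by fastforce
  obtain W\<^sub>1 Pw\<^sub>1 W\<^sub>2 Pw\<^sub>2 where P: "\<P>\<^sub>1 = (W\<^sub>1, Pw\<^sub>1)" "\<P>\<^sub>2 = (W\<^sub>2, Pw\<^sub>2)" by fastforce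
  have finite: "finite W\<^sub>1" "finite W\<^sub>2"
    using assms(1,2) by (simp_all add: me_model_def alcp_interp_def K P)
  have "induced_dist \<P>\<^sub>1 = me_dist R" "induced_dist \<P>\<^sub>2 = me_dist R"
    using assms(1,2) by (simp_all add: me_model_def K)
  moreover have "induced_dist (mix_interp t \<P>\<^sub>1 \<P>\<^sub>2) v
      = t * induced_dist \<P>\<^sub>1 v + (1 - t) * induced_dist \<P>\<^sub>2 v" for v
    using finite by (simp add: induced_dist_eq_event_mass event_mass_mix_interp P)
  ultimately have "induced_dist (mix_interp t \<P>\<^sub>1 \<P>\<^sub>2) v = me_dist R v" for v
    by (simp add: algebra_simps)
  moreover have "alcp_interp (mix_interp t \<P>\<^sub>1 \<P>\<^sub>2)"
    using assms by (intro alcp_interp_mix_interp) (simp_all add: me_model_def K)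
  ultimately show ?thesis
    using assms(1,2) by (auto simp: me_model_def mix_interp_def K P)
qed

lemma me_model_context_mass_eq:
  assumes "me_model \<P>\<^sub>1 K" "me_model \<P>\<^sub>2 K"
  shows "event_mass \<P>\<^sub>1 (\<lambda>I. psat (wval I) \<kappa>) = event_mass \<P>\<^sub>2 (\<lambda>I. psat (wval I) \<kappa>)"
  using assms
  by (auto simp: event_mass_context_eq_prob_form me_model_def alcp_interp_def split: prod.splits)

lemma cond_pr_mix_interp:
  fixes \<P>\<^sub>1 \<P>\<^sub>2 :: "('d, 'c, 'r, 'v) alcp_interp"
  assumes "finite (fst \<P>\<^sub>1)" "finite (fst \<P>\<^sub>2)"
    and "event_mass \<P>\<^sub>1 (\<lambda>I. psat (wval I) \<kappa>) = event_mass \<P>\<^sub>2 (\<lambda>I. psat (wval I) \<kappa>)"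
    and "cond_pr \<P>\<^sub>1 C D \<kappa> = Some p\<^sub>1" "cond_pr \<P>\<^sub>2 C D \<kappa> = Some p\<^sub>2"
  shows "cond_pr (mix_interp t \<P>\<^sub>1 \<P>\<^sub>2) C D \<kappa> = Some (t * p\<^sub>1 + (1 - t) * p\<^sub>2)"
proof -
  define d where "d = event_mass \<P>\<^sub>1 (\<lambda>I. psat (wval I) \<kappa>)"
  define incl :: "('d, 'c, 'r, 'v) pworld \<Rightarrow> bool"
    where "incl = (\<lambda>I. psat (wval I) \<kappa> \<and> world_sat_incl I C D)"
  have "0 < d" "event_mass \<P>\<^sub>1 incl = p\<^sub>1 * d" "event_mass \<P>\<^sub>2 incl = p\<^sub>2 * d"
    using assms(3-5) by (auto simp: cond_pr_eq_event_mass d_def incl_def split: if_splits)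
  with assms(1-3) show ?thesis
    by (simp add: cond_pr_eq_event_mass event_mass_mix_interp field_simps
        flip: d_def incl_def)
qed

theorem theorem2:
  fixes K :: "('c, 'r, 'v::finite) kb"
    and P1 P2 :: "('d, 'c, 'r, 'v) alcp_interp"
    and C D :: "('c, 'r) concept" and \<kappa> :: "'v pform"
    and p1 p2 p :: real
  assumes "me_consistent K TYPE('d)"
    and "p1 < p2"
    and "me_model P1 K" and "me_model P2 K"
    and "cond_pr P1 C D \<kappa> = Some p1"
    and "cond_pr P2 C D \<kappa> = Some p2"
    and "p1 \<le> p" and "p \<le> p2"
  shows "\<exists>P :: ('d, 'c, 'r, 'v) alcp_interp. me_model P K \<and> cond_pr P C D \<kappa> = Some p"
proof -
  define t where "t = (p2 - p) / (p2 - p1)"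
  have "t * p1 + (1 - t) * p2 = p2 - t * (p2 - p1)" by (simp add: algebra_simps)
  then have t: "0 \<le> t" "t \<le> 1" "t * p1 + (1 - t) * p2 = p"
    using assms(2,7,8) by (auto simp: t_def divide_simps)
  have "finite (fst P1)" "finite (fst P2)"
    using assms(3,4) by (auto simp: me_model_def alcp_interp_def split: prod.splits)
  then have "cond_pr (mix_interp t P1 P2) C D \<kappa> = Some p"
    using cond_pr_mix_interp me_model_context_mass_eq[OF assms(3,4)] assms(5,6) t(3) by metis
  then show ?thesis
    using me_model_mix_interp[OF assms(3,4) t(1,2)] by blast
qed

end
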